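(* Let $3\le k\le n-1$ and let $T$ be a tree attaining the maximum value of $M_2$ over $\mathcal{CT}_{n,k}$. Then $T$ contains no internal path of length greater than $1$.
   Context: A chemical tree is a tree with maximum degree at most $4$. A branching vertex is a vertex of degree greater than $2$. An internal path is a path $u_0\cdots u_r$ ($r\ge1$) whose end vertices $u_0,u_r$ are branching and whose internal vertices all have degree $2$; its length is $r$. A segment of a tree is a path of positive length neither of whose end vertices has degree $2$ and all of whose internal vertices have degree $2$. $\mathcal{CT}_{n,k}$ is the class of all $n$-vertex chemical trees with exactly $k$ segments. $M_2(G)=\sum_{uv\in E(G)}d_ud_v$, where $d_v$ is the degree of $v$. *)

theory Defs
  imports Main
begin

text \<open>Finite simple graphs given by a vertex set V and a set E of 2-element edges.\<close>

definition deg :: "'a set set \<Rightarrow> 'a \<Rightarrow> nat" where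
  "deg E v = card {e \<in> E. v \<in> e}"

definition is_walk :: "'a set set \<Rightarrow> 'a list \<Rightarrow> bool" where
  "is_walk E p \<longleftrightarrow> p \<noteq> [] \<and> (\<forall>i. Suc i < length p \<longrightarrow> {p ! i, p ! Suc i} \<in> E)"

definition is_path :: "'a set set \<Rightarrow> 'a list \<Rightarrow> bool" where
  "is_path E p \<longleftrightarrow> is_walk E p \<and> distinct p \<and> 2 \<le> length p"

definition path_length :: "'a list \<Rightarrow> nat" where
  "path_length p = length p - 1"

definition path_edges :: "'a list \<Rightarrow> 'a set set" where
  "path_edges p = {{p ! i, p ! Suc i} | i. Suc i < length p}"

definition internal_deg2 :: "'a set set \<Rightarrow> 'a list \<Rightarrow> bool" where
  "internal_deg2 E p \<longleftrightarrow> (\<forall>i. 0 < i \<and> Suc i < length p \<longrightarrow> deg E (p ! i) = 2)"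

definition is_tree :: "'a set \<Rightarrow> 'a set set \<Rightarrow> bool" where
  "is_tree V E \<longleftrightarrow> finite V \<and> V \<noteq> {} \<and>
     (\<forall>e \<in> E. e \<subseteq> V \<and> card e = 2) \<and>
     (\<forall>u \<in> V. \<forall>v \<in> V. \<exists>p. is_walk E p \<and> hd p = u \<and> last p = v) \<and>
     card E = card V - 1"

definition chemical_tree :: "'a set \<Rightarrow> 'a set set \<Rightarrow> bool" where
  "chemical_tree V E \<longleftrightarrow> is_tree V E \<and> (\<forall>v \<in> V. deg E v \<le> 4)"

definition branching :: "'a set set \<Rightarrow> 'a \<Rightarrow> bool" where
  "branching E v \<longleftrightarrow> deg E v > 2"

definition internal_path :: "'a set set \<Rightarrow> 'a list \<Rightarrow> bool" where
  "internal_path E p \<longleftrightarrow> is_path E p \<and> branching E (hd p) \<and> branching E (last p)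
      \<and> internal_deg2 E p"

definition is_segment :: "'a set set \<Rightarrow> 'a list \<Rightarrow> bool" where
  "is_segment E p \<longleftrightarrow> is_path E p \<and> deg E (hd p) \<noteq> 2 \<and> deg E (last p) \<noteq> 2
      \<and> internal_deg2 E p"

text \<open>Segments are counted as subgraphs (a path and its reversal are the same segment),
  i.e. via their edge sets.\<close>
definition num_segments :: "'a set set \<Rightarrow> nat" where
  "num_segments E = card {path_edges p | p. is_segment E p}"

definition CT :: "nat \<Rightarrow> nat \<Rightarrow> ('a set \<times> 'a set set) set" where
  "CT n k = {(V, E). chemical_tree V E \<and> card V = n \<and> num_segments E = k}"

definition M2 :: "'a set set \<Rightarrow> nat" where
  "M2 E = (\<Sum>e\<in>E. \<Prod>v\<in>e. deg E v)"

end

theory Submission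
  imports Defs
begin

text \<open>Suppose \<open>T\<close> has an internal path \<open>a u\<^sub>1 \<dots> u\<^sub>m b\<close> with \<open>m \<ge> 1\<close>, and let \<open>l\<close> be a leaf with
  neighbour \<open>x\<close>. Replacing the edges \<open>a u\<^sub>1\<close>, \<open>u\<^sub>m b\<close>, \<open>x l\<close> by \<open>a b\<close>, \<open>x u\<^sub>1\<close>, \<open>u\<^sub>m l\<close> cuts the
  inner vertices out of the path and inserts them into the pendant edge \<open>x l\<close>. The result is
  again a tree in which every vertex keeps its degree. Since every segment is traversed in two
  directions, each starting at a vertex of degree \<open>\<noteq> 2\<close> along one of its edges,
  \<open>2 \<cdot> #segments = \<Sum>\<^bsub>d(v) \<noteq> 2\<^esub> d(v)\<close>, so the number of segments is unchanged as well. But \<open>M\<^sub>2\<close>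
  grows by \<open>(d(a) - 2)(d(b) - 2) + d(x) - 2 > 0\<close>, as \<open>d(a), d(b) \<ge> 3\<close> and \<open>d(x) \<ge> 2\<close>;
  relabelling the vertices by natural numbers contradicts maximality.\<close>

section \<open>Walks and reachability\<close>

lemma is_walk_singleton [simp]: "is_walk E [u]"
  by (simp add: is_walk_def)

lemma is_walk_Cons_Cons: "is_walk E (u # v # q) \<longleftrightarrow> {u, v} \<in> E \<and> is_walk E (v # q)"
  by (auto simp: is_walk_def less_Suc_eq_0_disj)

lemma is_walk_append:
  assumes "xs \<noteq> []" and "ys \<noteq> []"
  shows "is_walk E (xs @ ys) \<longleftrightarrow> is_walk E xs \<and> {last xs, hd ys} \<in> E \<and> is_walk E ys"
  using assms
proof (induction xs rule: list_nonempty_induct)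
  case (single x)
  then show ?case by (cases ys) (auto simp: is_walk_Cons_Cons)
next
  case (cons x xs)
  then show ?case by (cases xs) (auto simp: is_walk_Cons_Cons)
qed

lemma is_walk_rev: "is_walk E q \<Longrightarrow> is_walk E (rev q)"
proof (induction q rule: induct_list012)
  case (3 x y q)
  then have "is_walk E (rev q @ [y])" "{y, x} \<in> E"
    by (auto simp: is_walk_Cons_Cons insert_commute)
  then show ?case using is_walk_append[of "rev q @ [y]" "[x]"] by simp
qed (simp_all add: is_walk_def)

lemma is_walk_drop: "is_walk E q \<Longrightarrow> i < length q \<Longrightarrow> is_walk E (drop i q)"
  by (simp add: is_walk_def)

lemma is_walk_subgraph:
  assumes "is_walk E q" and "\<And>e. e \<in> E \<Longrightarrow> e \<subseteq> set q \<Longrightarrow> e \<in> F"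
  shows "is_walk F q"
  using assms unfolding is_walk_def by (metis Suc_lessD empty_subsetI insert_subset nth_mem)

inductive reachable :: "'a set set \<Rightarrow> 'a \<Rightarrow> 'a \<Rightarrow> bool" for E where
  reachable_refl: "reachable E u u"
| reachable_step: "{u, v} \<in> E \<Longrightarrow> reachable E v w \<Longrightarrow> reachable E u w"

lemma reachable_edge: "{u, v} \<in> E \<Longrightarrow> reachable E u v"
  by (blast intro: reachable.intros)

lemma reachable_trans: "reachable E u v \<Longrightarrow> reachable E v w \<Longrightarrow> reachable E u w"
  by (induction rule: reachable.induct) (auto intro: reachable_step)

lemma reachable_sym: "reachable E u v \<Longrightarrow> reachable E v u"
proof (induction rule: reachable.induct)
  case (reachable_step u v w)
  then show ?case
    by (metis insert_commute reachable_edge reachable_trans)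
qed (rule reachable_refl)

lemma walk_reachable_hd: "is_walk E q \<Longrightarrow> v \<in> set q \<Longrightarrow> reachable E (hd q) v"
proof (induction q rule: induct_list012)
  case (3 x y q)
  then show ?case
    by (auto simp: is_walk_Cons_Cons intro: reachable_refl reachable_step)
qed (auto intro: reachable_refl)

lemma walk_reachable: "is_walk E q \<Longrightarrow> u \<in> set q \<Longrightarrow> v \<in> set q \<Longrightarrow> reachable E u v"
  by (meson reachable_sym reachable_trans walk_reachable_hd)

lemma reachable_walk: "reachable E u v \<Longrightarrow> \<exists>q. is_walk E q \<and> hd q = u \<and> last q = v"
proof (induction rule: reachable.induct)
  case (reachable_refl u)
  show ?case by (rule exI[of _ "[u]"]) (simp add: is_walk_def)
next
  case (reachable_step u v w)
  then obtain q where "is_walk E (v # q)" "last (v # q) = w"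
    by (metis list.collapse is_walk_def)
  with reachable_step.hyps(1) show ?case
    by (intro exI[of _ "u # v # q"]) (simp add: is_walk_Cons_Cons)
qed

lemma reachable_subgraph:
  "reachable E u v \<Longrightarrow> (\<And>a b. {a, b} \<in> E \<Longrightarrow> reachable F a b) \<Longrightarrow> reachable F u v"
  by (induction rule: reachable.induct) (auto intro: reachable_refl reachable_trans)

lemma reachable_closed:
  "reachable E u v \<Longrightarrow> u \<in> S \<Longrightarrow> (\<And>a b. {a, b} \<in> E \<Longrightarrow> a \<in> S \<Longrightarrow> b \<in> S) \<Longrightarrow> v \<in> S"
  by (induction rule: reachable.induct) auto

lemma reachable_image: "reachable E u v \<Longrightarrow> reachable ((`) f ` E) (f u) (f v)"
proof (induction rule: reachable.induct)
  case (reachable_step u v w)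
  have "{f u, f v} = f ` {u, v}" by simp
  then have "{f u, f v} \<in> (`) f ` E" using reachable_step.hyps(1) by blast
  then show ?case using reachable_step.IH by (rule reachable.reachable_step)
qed (rule reachable_refl)

text \<open>\<open>if v \<in> S then c else v\<close> is the image of \<open>v\<close> when \<open>S\<close> is contracted to the vertex \<open>c\<close>.\<close>
lemma reachable_collapse:
  assumes "reachable E v w" and "w \<notin> S"
    and outside: "\<And>a b. {a, b} \<in> E \<Longrightarrow> a \<notin> S \<Longrightarrow> b \<notin> S \<Longrightarrow> reachable F a b"
    and boundary: "\<And>a b. {a, b} \<in> E \<Longrightarrow> a \<in> S \<Longrightarrow> b \<notin> S \<Longrightarrow> reachable F c b"
  shows "reachable F (if v \<in> S then c else v) w"
  using assms(1,2)
proof (induction rule: reachable.induct)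
  case (reachable_refl u)
  then show ?case by (simp add: reachable.reachable_refl)
next
  case (reachable_step u v w)
  then have IH: "reachable F (if v \<in> S then c else v) w" by simp
  have vu: "{v, u} \<in> E" using reachable_step.hyps(1) by (simp add: insert_commute)
  consider "u \<notin> S" "v \<notin> S" | "u \<in> S" "v \<in> S" | "u \<in> S" "v \<notin> S" | "u \<notin> S" "v \<in> S"
    by blast
  then show ?case
  proof cases
    case 1
    then show ?thesis
      using reachable_trans[OF outside[OF reachable_step.hyps(1)]] IH by simp
  next
    case 2
    then show ?thesis using IH by simp
  next
    case 3
    then show ?thesis
      using reachable_trans[OF boundary[OF reachable_step.hyps(1)]] IH by simp
  next
    case 4
    then show ?thesis
      using reachable_trans[OF reachable_sym[OF boundary[OF vu]]] IH by simp
  qed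
qed

section \<open>Trees\<close>

lemma connected_card_vertices_le:
  assumes "finite V" and "finite E" and "z \<in> V" and conn: "\<forall>v\<in>V. reachable E v z"
  shows "card V \<le> card E + 1"
proof -
  txt \<open>\<open>D v\<close> is the distance from \<open>v\<close> to \<open>z\<close>; mapping each \<open>v \<noteq> z\<close> to an edge towards a
    closer neighbour is injective.\<close>
  define D where "D v = (LEAST n. \<exists>q. is_walk E q \<and> hd q = v \<and> last q = z \<and> length q = n)" for v
  have closer: "\<exists>y. {v, y} \<in> E \<and> D y < D v" if "v \<in> V" "v \<noteq> z" for v
  proof -
    have "reachable E v z" using conn that(1) by blast
    then have "\<exists>n q. is_walk E q \<and> hd q = v \<and> last q = z \<and> length q = n"
      by (auto dest: reachable_walk)
    then have "\<exists>q. is_walk E q \<and> hd q = v \<and> last q = z \<and> length q = D v"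
      unfolding D_def by (rule LeastI_ex)
    then obtain q where q: "is_walk E q" "hd q = v" "last q = z" "length q = D v"
      by blast
    then obtain y q' where q_eq: "q = v # y # q'"
      using \<open>v \<noteq> z\<close> by (cases q rule: remdups_adj.cases) (auto simp: is_walk_def)
    with q have "{v, y} \<in> E" "is_walk E (y # q')"
      by (simp_all add: is_walk_Cons_Cons)
    moreover have "D y \<le> length (y # q')"
      unfolding D_def using q q_eq calculation(2) by (intro Least_le) auto
    ultimately show ?thesis using q q_eq by auto
  qed
  then have "\<forall>v\<in>V - {z}. \<exists>y. {v, y} \<in> E \<and> D y < D v" by blast
  then obtain nxt where nxt: "\<forall>v\<in>V - {z}. {v, nxt v} \<in> E \<and> D (nxt v) < D v"
    by (rule bchoice[elim_format]) blast
  have "inj_on (\<lambda>v. {v, nxt v}) (V - {z})"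
  proof (rule inj_onI)
    fix v w assume vw: "v \<in> V - {z}" "w \<in> V - {z}" "{v, nxt v} = {w, nxt w}"
    show "v = w"
    proof (rule ccontr)
      assume "v \<noteq> w"
      with vw(3) have "v = nxt w" "w = nxt v" by (auto simp: doubleton_eq_iff)
      moreover have "D (nxt v) < D v" "D (nxt w) < D w" using nxt vw(1,2) by auto
      ultimately show False by simp
    qed
  qed
  moreover have "(\<lambda>v. {v, nxt v}) ` (V - {z}) \<subseteq> E" using nxt by auto
  ultimately have "card (V - {z}) \<le> card E" using \<open>finite E\<close> by (rule card_inj_on_le)
  with assms(1,3) show ?thesis by simp
qed

lemma tree_finite_vertices: "is_tree V E \<Longrightarrow> finite V"
  unfolding is_tree_def by blast

lemma tree_card_edges: "is_tree V E \<Longrightarrow> card E = card V - 1"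
  unfolding is_tree_def by blast

lemma tree_finite_edges: "is_tree V E \<Longrightarrow> finite E"
  unfolding is_tree_def by (meson Pow_iff finite_Pow_iff finite_subset subsetI)

lemma tree_edge_card: "is_tree V E \<Longrightarrow> e \<in> E \<Longrightarrow> card e = 2"
  unfolding is_tree_def by blast

lemma tree_edge_subset: "is_tree V E \<Longrightarrow> e \<in> E \<Longrightarrow> e \<subseteq> V"
  unfolding is_tree_def by blast

lemma tree_edgeD:
  assumes "is_tree V E" and "{a, b} \<in> E"
  shows "a \<noteq> b \<and> a \<in> V \<and> b \<in> V"
proof -
  have "card {a, b} = 2" "{a, b} \<subseteq> V"
    using assms tree_edge_card tree_edge_subset by blast+
  then show ?thesis by (cases "a = b") auto
qed

lemma tree_reachable: "is_tree V E \<Longrightarrow> u \<in> V \<Longrightarrow> v \<in> V \<Longrightarrow> reachable E u v"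
  unfolding is_tree_def
  by (metis walk_reachable_hd is_walk_def last_in_set)

lemma is_treeI:
  assumes "finite V" and "V \<noteq> {}" and "\<forall>e\<in>E. e \<subseteq> V \<and> card e = 2"
    and "\<forall>u\<in>V. \<forall>v\<in>V. reachable E u v" and "card E = card V - 1"
  shows "is_tree V E"
proof -
  have "\<exists>p. is_walk E p \<and> hd p = u \<and> last p = v" if "u \<in> V" "v \<in> V" for u v
    using assms(4) that by (intro reachable_walk) blast
  with assms(1-3,5) show ?thesis unfolding is_tree_def by blast
qed

lemma tree_edge_bridge:
  assumes tree: "is_tree V E" and ab: "{a, b} \<in> E"
  shows "\<not> reachable (E - {{a, b}}) a b"
proof
  let ?F = "E - {{a, b}}"
  assume ab_F: "reachable ?F a b"
  have edges: "reachable ?F u v" if "{u, v} \<in> E" for u v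
  proof (cases "{u, v} = {a, b}")
    case True
    then show ?thesis using ab_F reachable_sym by (auto simp: doubleton_eq_iff)
  next
    case False
    then show ?thesis using that by (simp add: reachable_edge)
  qed
  have a: "a \<in> V" using tree_edgeD[OF tree ab] by blast
  have "\<forall>v\<in>V. reachable ?F v a"
  proof
    fix v assume "v \<in> V"
    with tree have "reachable E v a" using a by (rule tree_reachable)
    then show "reachable ?F v a" using edges by (rule reachable_subgraph)
  qed
  moreover have "finite ?F" using tree_finite_edges[OF tree] by simp
  ultimately have "card V \<le> card ?F + 1"
    using connected_card_vertices_le[OF tree_finite_vertices[OF tree] _ a] by simp
  moreover have "card ?F = card E - 1" using ab by (rule card_Diff_singleton)
  moreover have "card E \<noteq> 0" using ab tree_finite_edges[OF tree] by auto
  ultimately show False using tree_card_edges[OF tree] by linarith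
qed

lemma tree_no_cycle:
  assumes tree: "is_tree V E" and q: "is_walk E q" "distinct q" "3 \<le> length q"
    and closing: "{last q, hd q} \<in> E"
  shows False
proof -
  obtain a b q' where q_eq: "q = a # b # q'"
    using q(3) by (cases q rule: remdups_adj.cases) auto
  with q(3) have "q' \<noteq> []" by auto
  let ?F = "E - {{a, b}}"
  have walk: "is_walk E (b # q')" and ab: "{a, b} \<in> E"
    using q(1) q_eq by (simp_all add: is_walk_Cons_Cons)
  have "a \<notin> set (b # q')" using q(2) q_eq by simp
  then have "is_walk ?F (b # q')"
    using is_walk_subgraph[OF walk, of ?F] by blast
  then have "reachable ?F b (last q)"
    using walk_reachable[of ?F "b # q'" b "last q"] q_eq by simp
  moreover have "last q \<noteq> a" "last q \<noteq> b"
    using q(2) q_eq \<open>q' \<noteq> []\<close> last_in_set by fastforce+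
  with closing q_eq have "reachable ?F (last q) a"
    by (intro reachable_edge) (auto simp: doubleton_eq_iff)
  ultimately have "reachable ?F a b"
    by (blast intro: reachable_sym reachable_trans)
  with tree_edge_bridge[OF tree ab] show False by contradiction
qed

text \<open>A connected graph on \<open>V\<close> has at least \<open>card V - 1\<close> edges, so no added edge can
  coincide with a kept one.\<close>
lemma tree_exchange:
  assumes tree: "is_tree V E" and "R \<subseteq> E" and "finite A" and "card A \<le> card R"
    and new_edges: "\<forall>e\<in>A. e \<subseteq> V \<and> card e = 2"
    and "z \<in> V" and conn: "\<forall>v\<in>V. reachable (E - R \<union> A) v z"
  shows "is_tree V (E - R \<union> A)" and "A \<inter> (E - R) = {}"
proof -
  let ?E' = "E - R \<union> A"
  have fin: "finite V" "finite E" "finite R"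
    using tree_finite_vertices[OF tree] tree_finite_edges[OF tree] \<open>R \<subseteq> E\<close> finite_subset
    by blast+
  have "finite ?E'" using fin \<open>finite A\<close> by blast
  with fin(1) have "card V \<le> card ?E' + 1"
    using \<open>z \<in> V\<close> conn by (rule connected_card_vertices_le)
  moreover have "card (E - R) + card A = card ?E' + card ((E - R) \<inter> A)"
    using fin \<open>finite A\<close> by (intro card_Un_Int) auto
  moreover have "card (E - R) + card R = card E"
    using fin \<open>R \<subseteq> E\<close> by (simp add: card_Diff_subset card_mono)
  moreover have "card E = card V - 1" "card V \<noteq> 0"
    using tree_card_edges[OF tree] fin \<open>z \<in> V\<close> by auto
  ultimately have "card ((E - R) \<inter> A) = 0" "card ?E' = card V - 1"
    using \<open>card A \<le> card R\<close> by linarith+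
  then show "A \<inter> (E - R) = {}"
    using fin \<open>finite A\<close> by auto
  have "\<forall>u\<in>V. \<forall>v\<in>V. reachable ?E' u v"
    using conn by (blast intro: reachable_trans reachable_sym)
  moreover have "\<forall>e\<in>?E'. e \<subseteq> V \<and> card e = 2"
    using new_edges tree_edge_subset[OF tree] tree_edge_card[OF tree] by blast
  ultimately show "is_tree V (E - R \<union> A)"
    using \<open>card ?E' = card V - 1\<close> fin \<open>z \<in> V\<close> by (intro is_treeI) auto
qed

lemma tree_degree_sum:
  assumes tree: "is_tree V E"
  shows "(\<Sum>v\<in>V. deg E v) = 2 * card E"
  unfolding deg_def
proof (rule sum_multicount)
  show "finite V" "finite E"
    using tree_finite_vertices[OF tree] tree_finite_edges[OF tree] .
  show "\<forall>e\<in>E. card {v \<in> V. v \<in> e} = 2"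
  proof
    fix e assume "e \<in> E"
    then have "{v \<in> V. v \<in> e} = e" using tree_edge_subset[OF tree] by blast
    then show "card {v \<in> V. v \<in> e} = 2" using tree_edge_card[OF tree \<open>e \<in> E\<close>] by simp
  qed
qed

lemma card_le_deg:
  assumes "deg E v \<noteq> 0" and "\<And>y. y \<in> Y \<Longrightarrow> {v, y} \<in> E"
  shows "card Y \<le> deg E v"
  unfolding deg_def
proof (rule card_inj_on_le)
  show "inj_on (\<lambda>y. {v, y}) Y" by (auto intro: inj_onI simp: doubleton_eq_iff)
  show "(\<lambda>y. {v, y}) ` Y \<subseteq> {e \<in> E. v \<in> e}" using assms(2) by auto
  show "finite {e \<in> E. v \<in> e}" using assms(1) card.infinite unfolding deg_def by metis
qed

lemma deg2_neighbour:
  assumes "deg E v = 2" and "{v, a} \<in> E" "{v, b} \<in> E" "{v, c} \<in> E" and "a \<noteq> b"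
  shows "c = a \<or> c = b"
proof (rule ccontr)
  assume "\<not> (c = a \<or> c = b)"
  with \<open>a \<noteq> b\<close> have "card {a, b, c} = 3" by (auto simp: card_insert_if)
  moreover have "card {a, b, c} \<le> deg E v"
    using assms by (intro card_le_deg) auto
  ultimately show False using assms(1) by simp
qed

lemma deg1_neighbour:
  assumes "deg E v = 1" and "{v, a} \<in> E" "{v, b} \<in> E"
  shows "a = b"
proof (rule ccontr)
  assume "a \<noteq> b"
  then have "card {a, b} = 2" by simp
  moreover have "card {a, b} \<le> deg E v"
    using assms by (intro card_le_deg) auto
  ultimately show False using assms(1) by simp
qed

lemma exists_neighbour_outside:
  assumes edges: "\<forall>e\<in>E. card e = 2" and "finite U" and "card U < deg E v"
  shows "\<exists>y. y \<notin> U \<and> y \<noteq> v \<and> {v, y} \<in> E"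
proof -
  have "card ((\<lambda>u. {v, u}) ` U) < card {e \<in> E. v \<in> e}"
    using card_image_le[OF \<open>finite U\<close>] assms(3) unfolding deg_def by (meson le_less_trans)
  then obtain e where e: "e \<in> E" "v \<in> e" "e \<notin> (\<lambda>u. {v, u}) ` U"
    by (metis (no_types, lifting) card_mono finite_imageI leD mem_Collect_eq subsetI \<open>finite U\<close>)
  then obtain y where "e = {v, y}" "y \<noteq> v"
    using edges by (metis card_2_iff doubleton_eq_iff insertE singleton_iff)
  with e show ?thesis by blast
qed

lemma tree_deg_pos:
  assumes tree: "is_tree V E" and "v \<in> V" "w \<in> V" "v \<noteq> w"
  shows "deg E v \<noteq> 0"
proof -
  from tree_reachable[OF assms(1-3)] \<open>v \<noteq> w\<close> obtain y where "{v, y} \<in> E"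
    by (cases rule: reachable.cases) auto
  then show ?thesis
    using tree_finite_edges[OF tree] unfolding deg_def by (auto simp: card_eq_0_iff)
qed

lemma tree_leaf_exists:
  assumes tree: "is_tree V E" and "2 \<le> card V"
  shows "\<exists>l\<in>V. deg E l = 1"
proof (rule ccontr)
  assume no_leaf: "\<not> (\<exists>l\<in>V. deg E l = 1)"
  have "2 \<le> deg E v" if "v \<in> V" for v
  proof -
    have "\<not> V \<subseteq> {v}" using \<open>2 \<le> card V\<close> card_mono[of "{v}" V] by auto
    then obtain w where "w \<in> V" "w \<noteq> v" by blast
    then show ?thesis using tree_deg_pos[OF tree that] no_leaf that by fastforce
  qed
  then have "(\<Sum>v\<in>V. 2) \<le> (\<Sum>v\<in>V. deg E v)" by (rule sum_mono)
  then have "2 * card V \<le> (\<Sum>v\<in>V. deg E v)" by simp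
  then show False
    using tree_degree_sum[OF tree] tree_card_edges[OF tree] \<open>2 \<le> card V\<close> by linarith
qed

section \<open>Counting segments\<close>

lemma set_butlast_tl: "set (butlast (tl s)) = {s ! i | i. 0 < i \<and> Suc i < length s}"
proof (intro set_eqI iffI)
  fix v assume "v \<in> set (butlast (tl s))"
  then obtain i where "i < length (butlast (tl s))" "v = butlast (tl s) ! i"
    by (auto simp: in_set_conv_nth)
  then have "Suc (Suc i) < length s" "v = s ! Suc i" by (auto simp: nth_butlast nth_tl)
  then show "v \<in> {s ! i | i. 0 < i \<and> Suc i < length s}" by force
next
  fix v assume "v \<in> {s ! i | i. 0 < i \<and> Suc i < length s}"
  then obtain i where "0 < i" "Suc i < length s" "v = s ! i" by blast
  then show "v \<in> set (butlast (tl s))"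
    unfolding in_set_conv_nth by (intro exI[of _ "i - 1"]) (auto simp: nth_butlast nth_tl)
qed

lemma internal_deg2_iff: "internal_deg2 E s \<longleftrightarrow> (\<forall>v\<in>set (butlast (tl s)). deg E v = 2)"
  unfolding internal_deg2_def set_butlast_tl by blast

lemma is_segment_rev:
  assumes "is_segment E s"
  shows "is_segment E (rev s)"
proof -
  have "tl (rev s) = rev (butlast s)" by (metis butlast_rev rev_rev_ident)
  then have "set (butlast (tl (rev s))) = set (butlast (tl s))" by (simp add: butlast_tl)
  with assms show ?thesis
    unfolding is_segment_def is_path_def internal_deg2_iff by (simp add: is_walk_rev hd_rev last_rev)
qed

lemma path_edges_rev_subset: "path_edges (rev s) \<subseteq> path_edges s"
proof
  fix e assume "e \<in> path_edges (rev s)"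
  then obtain i where i: "Suc i < length s" "e = {rev s ! i, rev s ! Suc i}"
    unfolding path_edges_def by auto
  define j where "j = length s - Suc (Suc i)"
  have "rev s ! i = s ! Suc j" "rev s ! Suc i = s ! j" "Suc j < length s"
    using i(1) unfolding j_def by (auto simp: rev_nth Suc_diff_Suc)
  with i(2) show "e \<in> path_edges s"
    unfolding path_edges_def by (auto simp: insert_commute)
qed

lemma path_edges_rev: "path_edges (rev s) = path_edges s"
  using path_edges_rev_subset[of s] path_edges_rev_subset[of "rev s"] by simp

lemma deg2_walk_unique:
  assumes "is_walk E (a # b # q)" "is_walk E (a # b # q')"
    and "distinct (a # b # q)" "distinct (a # b # q')"
    and "\<forall>v\<in>set (butlast (b # q)). deg E v = 2" "\<forall>v\<in>set (butlast (b # q')). deg E v = 2"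
    and "deg E (last (b # q)) \<noteq> 2" "deg E (last (b # q')) \<noteq> 2"
  shows "q = q'"
  using assms
proof (induction q arbitrary: a b q')
  case Nil
  then show ?case by (cases q') auto
next
  case (Cons c q)
  then obtain c' q'' where q': "q' = c' # q''" by (cases q') auto
  have "deg E b = 2" using Cons.prems(5) by simp
  moreover have "{b, a} \<in> E" "{b, c} \<in> E" "{b, c'} \<in> E"
    using Cons.prems(1,2) q' by (simp_all add: is_walk_Cons_Cons insert_commute)
  moreover have "a \<noteq> c" "c' \<noteq> a" using Cons.prems(3,4) q' by auto
  ultimately have "c' = c" using deg2_neighbour by metis
  with Cons.prems have "q = q''"
    by (intro Cons.IH[of b c]) (auto simp: q' is_walk_Cons_Cons)
  with \<open>c' = c\<close> show ?case by (simp add: q')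
qed

lemma segment_eq_if_same_start:
  assumes s: "is_segment E s" and t: "is_segment E t"
    and "s ! 0 = t ! 0" and "s ! 1 = t ! 1"
  shows "s = t"
proof -
  obtain a b q where s_eq: "s = a # b # q"
    using s unfolding is_segment_def is_path_def by (cases s rule: remdups_adj.cases) auto
  obtain a' b' q' where t_eq: "t = a' # b' # q'"
    using t unfolding is_segment_def is_path_def by (cases t rule: remdups_adj.cases) auto
  have "a' = a" "b' = b" using assms(3,4) s_eq t_eq by simp_all
  then have "q = q'"
    using s t unfolding s_eq t_eq is_segment_def is_path_def internal_deg2_iff
    by (intro deg2_walk_unique[of E a b]) auto
  then show ?thesis using s_eq t_eq \<open>a' = a\<close> \<open>b' = b\<close> by simp
qed

lemma segment_eq_or_rev_if_same_edges:
  assumes s: "is_segment E s" and t: "is_segment E t" and edges: "path_edges s = path_edges t"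
  shows "t = s \<or> t = rev s"
proof -
  have len: "2 \<le> length s" "2 \<le> length t"
    using s t unfolding is_segment_def is_path_def by simp_all
  have "{t ! 0, t ! 1} \<in> path_edges t"
    using len(2) unfolding path_edges_def by (auto intro!: exI[of _ 0])
  then have "{t ! 0, t ! 1} \<in> path_edges s" using edges by simp
  then obtain i where i: "Suc i < length s" "{t ! 0, t ! 1} = {s ! i, s ! Suc i}"
    unfolding path_edges_def by blast
  have t0: "deg E (t ! 0) \<noteq> 2"
    using t len(2) unfolding is_segment_def by (cases t) auto
  have inner: "deg E (s ! j) = 2" if "0 < j" "Suc j < length s" for j
    using s that unfolding is_segment_def internal_deg2_def by blast
  from i(2) consider "t ! 0 = s ! i" "t ! 1 = s ! Suc i" | "t ! 0 = s ! Suc i" "t ! 1 = s ! i"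
    by (auto simp: doubleton_eq_iff)
  then show ?thesis
  proof cases
    case 1
    with inner[of i] t0 i(1) have "i = 0" by auto
    with 1 have "s = t" using segment_eq_if_same_start[OF s t] by simp
    then show ?thesis by simp
  next
    case 2
    with inner[of "Suc i"] t0 have "length s = Suc (Suc i)" using i(1) by fastforce
    with 2 have "rev s ! 0 = t ! 0" "rev s ! 1 = t ! 1" by (simp_all add: rev_nth)
    then have "rev s = t" using segment_eq_if_same_start[OF is_segment_rev[OF s] t] by simp
    then show ?thesis by simp
  qed
qed

lemma tree_walk_extend:
  assumes tree: "is_tree V E" and q: "is_walk E q" "distinct q" "2 \<le> length q"
    and "deg E (last q) = 2"
  shows "\<exists>y. y \<notin> set q \<and> {last q, y} \<in> E"
proof -
  define n where "n = length q"
  have "q \<noteq> []" using q(3) by auto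
  then have last_q: "last q = q ! (n - 1)" unfolding n_def by (rule last_conv_nth)
  have "Suc (n - 2) < length q" "Suc (n - 2) = n - 1" using q(3) unfolding n_def by auto
  then have "{q ! (n - 2), last q} \<in> E" using q(1) last_q unfolding is_walk_def by metis
  then obtain y where y: "y \<noteq> q ! (n - 2)" "y \<noteq> last q" "{last q, y} \<in> E"
    using exists_neighbour_outside[of E "{q ! (n - 2)}" "last q"] tree_edge_card[OF tree]
      \<open>deg E (last q) = 2\<close> by auto
  have "y \<notin> set q"
  proof
    assume "y \<in> set q"
    then obtain j where j: "j < n" "q ! j = y" by (auto simp: in_set_conv_nth n_def)
    with y last_q have "j \<noteq> n - 1" "j \<noteq> n - 2" by auto
    with j(1) have "3 \<le> length (drop j q)" unfolding n_def by simp
    moreover have "is_walk E (drop j q)" "distinct (drop j q)"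
      using q(1,2) j(1) unfolding n_def by (simp_all add: is_walk_drop)
    moreover have "hd (drop j q) = y" "last (drop j q) = last q"
      using j unfolding n_def by (simp_all add: hd_drop_conv_nth)
    ultimately show False using tree_no_cycle[OF tree] y(3) by metis
  qed
  with y show ?thesis by blast
qed

lemma internal_deg2_snoc:
  assumes "internal_deg2 E s" and "s \<noteq> []" and "deg E (last s) = 2"
  shows "internal_deg2 E (s @ [y])"
  unfolding internal_deg2_def
proof (intro allI impI)
  fix i assume i: "0 < i \<and> Suc i < length (s @ [y])"
  show "deg E ((s @ [y]) ! i) = 2"
  proof (cases "Suc i < length s")
    case True
    then show ?thesis using assms(1) i unfolding internal_deg2_def by (simp add: nth_append)
  next
    case False
    with i have "i = length s - 1" by auto
    then show ?thesis using assms(2,3) by (simp add: nth_append last_conv_nth)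
  qed
qed

lemma segment_exists:
  assumes tree: "is_tree V E" and "deg E v \<noteq> 2" and "{v, w} \<in> E"
  shows "\<exists>s. is_segment E s \<and> s ! 0 = v \<and> s ! 1 = w"
proof -
  have "\<exists>s. is_segment E s \<and> s ! 0 = v \<and> s ! 1 = w"
    if "is_walk E s" "distinct s" "2 \<le> length s" "s ! 0 = v" "s ! 1 = w"
      "internal_deg2 E s" "set s \<subseteq> V" for s
    using that
  proof (induction s rule: measure_induct_rule[where f = "\<lambda>s. card V - length s"])
    case (less s)
    have "s \<noteq> []" using less.prems(3) by auto
    show ?case
    proof (cases "deg E (last s) = 2")
      case False
      with less.prems \<open>s \<noteq> []\<close> \<open>deg E v \<noteq> 2\<close> have "is_segment E s"
        unfolding is_segment_def is_path_def by (simp add: hd_conv_nth)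
      with less.prems show ?thesis by blast
    next
      case True
      then obtain y where y: "y \<notin> set s" "{last s, y} \<in> E"
        using tree_walk_extend[OF tree less.prems(1-3)] by blast
      let ?s = "s @ [y]"
      have walk: "is_walk E ?s" using less.prems(1) y(2) \<open>s \<noteq> []\<close> by (simp add: is_walk_append)
      have dist: "distinct ?s" using y(1) less.prems(2) by simp
      have start: "2 \<le> length ?s" "?s ! 0 = v" "?s ! 1 = w"
        using less.prems(3-5) \<open>s \<noteq> []\<close> by (simp_all add: nth_append)
      have inner: "internal_deg2 E ?s"
        using less.prems(6) \<open>s \<noteq> []\<close> True by (rule internal_deg2_snoc)
      have sub: "set ?s \<subseteq> V" using less.prems(7) tree_edgeD[OF tree y(2)] by simp
      have "length ?s \<le> card V"
        using card_mono[OF tree_finite_vertices[OF tree] sub] distinct_card[OF dist] by simp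
      then have "card V - length ?s < card V - length s" by simp
      from this walk dist start inner sub show ?thesis by (rule less.IH)
    qed
  qed
  moreover have "is_walk E [v, w]" using \<open>{v, w} \<in> E\<close> by (simp add: is_walk_Cons_Cons)
  moreover have "distinct [v, w]" "set [v, w] \<subseteq> V" using tree_edgeD[OF tree \<open>{v, w} \<in> E\<close>] by simp_all
  moreover have "internal_deg2 E [v, w]" by (simp add: internal_deg2_def)
  ultimately show ?thesis by simp
qed

lemma segment_start_bij:
  assumes tree: "is_tree V E"
  shows "bij_betw (\<lambda>s. (s ! 0, {s ! 0, s ! 1})) {s. is_segment E s}
    (SIGMA v:{v \<in> V. deg E v \<noteq> 2}. {e \<in> E. v \<in> e})"
proof (rule bij_betw_imageI)
  show "inj_on (\<lambda>s. (s ! 0, {s ! 0, s ! 1})) {s. is_segment E s}"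
  proof (rule inj_onI)
    fix s t assume s: "s \<in> {s. is_segment E s}" and t: "t \<in> {s. is_segment E s}"
      and eq: "(s ! 0, {s ! 0, s ! 1}) = (t ! 0, {t ! 0, t ! 1})"
    have "distinct s" "2 \<le> length s" using s unfolding is_segment_def is_path_def by auto
    then have "s ! 0 \<noteq> s ! 1" by (cases s rule: remdups_adj.cases) auto
    with eq have "s ! 0 = t ! 0" "s ! 1 = t ! 1" by (auto simp: doubleton_eq_iff)
    with s t show "s = t" by (auto intro: segment_eq_if_same_start)
  qed
  show "(\<lambda>s. (s ! 0, {s ! 0, s ! 1})) ` {s. is_segment E s}
    = (SIGMA v:{v \<in> V. deg E v \<noteq> 2}. {e \<in> E. v \<in> e})"
  proof (intro set_eqI iffI)
    fix x assume "x \<in> (\<lambda>s. (s ! 0, {s ! 0, s ! 1})) ` {s. is_segment E s}"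
    then obtain s where s: "is_segment E s" and x: "x = (s ! 0, {s ! 0, s ! 1})" by blast
    then have "{s ! 0, s ! 1} \<in> E" "s \<noteq> []"
      unfolding is_segment_def is_path_def is_walk_def by auto
    moreover have "deg E (s ! 0) \<noteq> 2"
      using s \<open>s \<noteq> []\<close> unfolding is_segment_def by (simp add: hd_conv_nth)
    ultimately show "x \<in> (SIGMA v:{v \<in> V. deg E v \<noteq> 2}. {e \<in> E. v \<in> e})"
      using x tree_edgeD[OF tree] by auto
  next
    fix x assume "x \<in> (SIGMA v:{v \<in> V. deg E v \<noteq> 2}. {e \<in> E. v \<in> e})"
    then obtain v e where x: "x = (v, e)" and "deg E v \<noteq> 2" "e \<in> E" "v \<in> e" by blast
    then obtain w where "e = {v, w}"
      using tree_edge_card[OF tree] by (metis card_2_iff insert_commute insertE singletonD)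
    with \<open>deg E v \<noteq> 2\<close> \<open>e \<in> E\<close> obtain s where "is_segment E s" "s ! 0 = v" "s ! 1 = w"
      using segment_exists[OF tree] by blast
    with x \<open>e = {v, w}\<close> show "x \<in> (\<lambda>s. (s ! 0, {s ! 0, s ! 1})) ` {s. is_segment E s}"
      by force
  qed
qed

lemma card_segments:
  assumes fin: "finite {s. is_segment E s}"
  shows "card {s. is_segment E s} = 2 * num_segments E"
proof -
  let ?S = "{s. is_segment E s}"
  let ?F = "path_edges ` ?S"
  let ?fiber = "\<lambda>P. {s \<in> ?S. path_edges s = P}"
  have fiber: "card (?fiber P) = 2" if "P \<in> ?F" for P
  proof -
    obtain t where t: "is_segment E t" "P = path_edges t" using \<open>P \<in> ?F\<close> by blast
    then have "?fiber P = {t, rev t}"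
      using segment_eq_or_rev_if_same_edges[OF t(1)] is_segment_rev path_edges_rev by fastforce
    moreover have "t \<noteq> rev t"
    proof
      assume "t = rev t"
      then have "hd t = last t" by (metis hd_rev)
      moreover have "distinct t" "2 \<le> length t" using t(1) unfolding is_segment_def is_path_def by simp_all
      ultimately show False by (cases t rule: rev_cases) (auto simp: hd_append split: if_splits)
    qed
    ultimately show ?thesis by simp
  qed
  have "?S = (\<Union>P\<in>?F. ?fiber P)" by blast
  then have "card ?S = card (\<Union>P\<in>?F. ?fiber P)" by (rule arg_cong)
  also have "\<dots> = (\<Sum>P\<in>?F. card (?fiber P))"
    using fin by (intro card_UN_disjoint) auto
  also have "\<dots> = 2 * card ?F" using fiber by simp
  also have "card ?F = num_segments E"
    unfolding num_segments_def by (simp add: setcompr_eq_image)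
  finally show ?thesis .
qed

lemma num_segments_tree:
  assumes tree: "is_tree V E"
  shows "2 * num_segments E = (\<Sum>v\<in>{v \<in> V. deg E v \<noteq> 2}. deg E v)"
proof -
  let ?D = "SIGMA v:{v \<in> V. deg E v \<noteq> 2}. {e \<in> E. v \<in> e}"
  have "finite ?D"
    using tree_finite_vertices[OF tree] tree_finite_edges[OF tree] by simp
  with segment_start_bij[OF tree] have "finite {s. is_segment E s}"
    "card {s. is_segment E s} = card ?D"
    by (simp_all add: bij_betw_finite bij_betw_same_card)
  moreover have "card ?D = (\<Sum>v\<in>{v \<in> V. deg E v \<noteq> 2}. deg E v)"
    using tree_finite_vertices[OF tree] tree_finite_edges[OF tree] by (simp add: deg_def)
  ultimately show ?thesis using card_segments by metis
qed

lemma num_segments_eq_if_same_degrees: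
  assumes "is_tree V E" and "is_tree V E'" and "\<And>v. v \<in> V \<Longrightarrow> deg E' v = deg E v"
  shows "num_segments E' = num_segments E"
proof -
  have "2 * num_segments E' = (\<Sum>v\<in>{v \<in> V. deg E' v \<noteq> 2}. deg E' v)"
    using assms(2) by (rule num_segments_tree)
  also have "\<dots> = (\<Sum>v\<in>{v \<in> V. deg E v \<noteq> 2}. deg E v)"
    using assms(3) by (intro sum.cong) auto
  also have "\<dots> = 2 * num_segments E"
    using assms(1) by (rule num_segments_tree[symmetric])
  finally show ?thesis by simp
qed

lemma CT_same_degrees:
  assumes "(V, E) \<in> CT n k" and "is_tree V E'" and "\<And>v. v \<in> V \<Longrightarrow> deg E' v = deg E v"
  shows "(V, E') \<in> CT n k"
  using assms num_segments_eq_if_same_degrees[of V E E']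
  unfolding CT_def chemical_tree_def by auto

section \<open>Relabelling vertices\<close>

context
  fixes f :: "'a \<Rightarrow> 'b" and V :: "'a set" and E :: "'a set set"
  assumes tree: "is_tree V E" and inj: "inj_on f V"
begin

private lemma inj_on_image_edges: "inj_on ((`) f) E"
  using inj_on_image_Pow[OF inj] tree_edge_subset[OF tree] by (meson PowI inj_on_subset subsetI)

private lemma inj_on_edge: "e \<in> E \<Longrightarrow> inj_on f e"
  using inj tree_edge_subset[OF tree] by (rule inj_on_subset)

lemma deg_relabel: "v \<in> V \<Longrightarrow> deg ((`) f ` E) (f v) = deg E v"
proof -
  assume v: "v \<in> V"
  have "{e' \<in> (`) f ` E. f v \<in> e'} = (`) f ` {e \<in> E. v \<in> e}"
    using inj_on_image_mem_iff[OF inj v] tree_edge_subset[OF tree] by blast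
  moreover have "inj_on ((`) f) {e \<in> E. v \<in> e}"
    using inj_on_image_edges by (rule inj_on_subset) blast
  ultimately show ?thesis unfolding deg_def by (simp add: card_image)
qed

lemma tree_relabel: "is_tree (f ` V) ((`) f ` E)"
proof (rule is_treeI)
  have "V \<noteq> {}" using tree unfolding is_tree_def by blast
  then show "finite (f ` V)" "f ` V \<noteq> {}" using tree_finite_vertices[OF tree] by auto
  show "\<forall>e'\<in>(`) f ` E. e' \<subseteq> f ` V \<and> card e' = 2"
    using tree_edge_subset[OF tree] tree_edge_card[OF tree] inj_on_edge by (auto simp: card_image)
  show "\<forall>u\<in>f ` V. \<forall>v\<in>f ` V. reachable ((`) f ` E) u v"
  proof (intro ballI)
    fix u' v' assume "u' \<in> f ` V" "v' \<in> f ` V"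
    then obtain u v where "u \<in> V" "v \<in> V" "u' = f u" "v' = f v" by blast
    then show "reachable ((`) f ` E) u' v'"
      using reachable_image[OF tree_reachable[OF tree]] by simp
  qed
  show "card ((`) f ` E) = card (f ` V) - 1"
    using card_image[OF inj_on_image_edges] card_image[OF inj] tree_card_edges[OF tree] by simp
qed

lemma M2_relabel: "M2 ((`) f ` E) = M2 E"
proof -
  have "M2 ((`) f ` E) = (\<Sum>e\<in>E. \<Prod>x\<in>f ` e. deg ((`) f ` E) x)"
    unfolding M2_def by (rule sum.reindex[OF inj_on_image_edges, unfolded comp_def])
  also have "\<dots> = (\<Sum>e\<in>E. \<Prod>v\<in>e. deg E v)"
  proof (rule sum.cong[OF refl])
    fix e assume e: "e \<in> E"
    have "(\<Prod>x\<in>f ` e. deg ((`) f ` E) x) = (\<Prod>v\<in>e. deg ((`) f ` E) (f v))"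
      using prod.reindex[OF inj_on_edge[OF e]] by simp
    also have "\<dots> = (\<Prod>v\<in>e. deg E v)"
      using deg_relabel tree_edge_subset[OF tree e] by (intro prod.cong) auto
    finally show "(\<Prod>x\<in>f ` e. deg ((`) f ` E) x) = (\<Prod>v\<in>e. deg E v)" .
  qed
  finally show ?thesis unfolding M2_def .
qed

lemma num_segments_relabel: "num_segments ((`) f ` E) = num_segments E"
proof -
  have "{v' \<in> f ` V. deg ((`) f ` E) v' \<noteq> 2} = f ` {v \<in> V. deg E v \<noteq> 2}"
    using deg_relabel by auto
  moreover have "inj_on f {v \<in> V. deg E v \<noteq> 2}" using inj by (rule inj_on_subset) blast
  ultimately have "(\<Sum>v'\<in>{v' \<in> f ` V. deg ((`) f ` E) v' \<noteq> 2}. deg ((`) f ` E) v')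
      = (\<Sum>v\<in>{v \<in> V. deg E v \<noteq> 2}. deg E v)"
    using deg_relabel by (simp add: sum.reindex)
  then show ?thesis
    using num_segments_tree[OF tree_relabel] num_segments_tree[OF tree] by simp
qed

lemma CT_relabel: "(V, E) \<in> CT n k \<Longrightarrow> (f ` V, (`) f ` E) \<in> CT n k"
  using tree_relabel deg_relabel num_segments_relabel card_image[OF inj]
  unfolding CT_def chemical_tree_def by auto

end

section \<open>Moving an internal path onto a pendant edge\<close>

lemma sum_exchange:
  assumes "finite E" and "R \<subseteq> E" and "finite A" and "A \<inter> (E - R) = {}"
  shows "sum f (E - R \<union> A) + sum f R = sum f E + (sum f A :: 'b::comm_monoid_add)"
proof -
  have "sum f (E - R \<union> A) = sum f (E - R) + sum f A"
    using assms by (subst sum.union_disjoint) auto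
  moreover have "sum f E = sum f (E - R) + sum f R"
    using assms(2,1) by (rule sum.subset_diff)
  ultimately show ?thesis by (simp add: ac_simps)
qed

lemma deg_eq_sum: "finite E \<Longrightarrow> deg E v = (\<Sum>e\<in>E. of_bool (v \<in> e))"
  unfolding deg_def by (simp add: sum.If_cases Int_def)

lemma sum_three: "e1 \<noteq> e2 \<Longrightarrow> e1 \<noteq> e3 \<Longrightarrow> e2 \<noteq> e3 \<Longrightarrow> sum f {e1, e2, e3} = f e1 + f e2 + f e3"
  by (simp add: add.assoc)

lemma of_bool_mem_doubleton:
  "s \<noteq> t \<Longrightarrow> (of_bool (v \<in> {s, t}) :: nat) = of_bool (v = s) + of_bool (v = t)"
  by auto

locale long_internal_path =
  fixes V :: "'a set" and E :: "'a set set" and a b :: 'a and q :: "'a list"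
  assumes tree: "is_tree V E"
    and internal: "internal_path E (a # q @ [b])"
    and inner_nonempty: "q \<noteq> []"
begin

lemma path_walk: "is_walk E (a # q @ [b])" and path_distinct: "distinct (a # q @ [b])"
  using internal unfolding internal_path_def is_path_def by simp_all

lemma walk_inner: "is_walk E q" and edge_first: "{a, hd q} \<in> E" and edge_last: "{last q, b} \<in> E"
proof -
  have "is_walk E ([a] @ (q @ [b]))" using path_walk by simp
  then have "{a, hd q} \<in> E \<and> is_walk E (q @ [b])"
    using inner_nonempty by (subst (asm) is_walk_append) simp_all
  then show "{a, hd q} \<in> E" "is_walk E q" "{last q, b} \<in> E"
    using inner_nonempty by (simp_all add: is_walk_append)
qed

lemma ends_notin_inner: "a \<notin> set q" "b \<notin> set q" "a \<noteq> b"
  using path_distinct by auto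

lemma deg_ends: "3 \<le> deg E a" "3 \<le> deg E b"
  using internal unfolding internal_path_def branching_def by simp_all

lemma deg_inner: "v \<in> set q \<Longrightarrow> deg E v = 2"
  using internal inner_nonempty unfolding internal_path_def internal_deg2_iff by simp

lemma inner_neighbour:
  assumes "v \<in> set q" and "{v, y} \<in> E"
  shows "y \<in> insert a (insert b (set q))"
proof -
  obtain q1 q2 where q: "q = q1 @ v # q2" using assms(1) split_list by metis
  define xs ys where "xs = a # q1" and "ys = q2 @ [b]"
  have p: "a # q @ [b] = xs @ v # ys" unfolding xs_def ys_def q by simp
  have ys: "ys = hd ys # tl ys" unfolding ys_def by simp
  have "is_walk E (xs @ v # ys)" using path_walk p by simp
  then have "{last xs, v} \<in> E" "is_walk E (v # hd ys # tl ys)"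
    using is_walk_append[of xs "v # ys" E] ys unfolding xs_def by simp_all
  then have "{v, last xs} \<in> E" "{v, hd ys} \<in> E"
    by (simp_all add: insert_commute is_walk_Cons_Cons)
  moreover have "last xs \<noteq> hd ys"
    using path_distinct p ys unfolding xs_def
    by (metis distinct_append disjoint_iff last_in_set list.distinct(1) list.set_intros(1,2))
  ultimately have "y = last xs \<or> y = hd ys"
    using deg2_neighbour[OF deg_inner[OF assms(1)] _ _ assms(2)] by blast
  moreover have "last xs \<in> insert a (set q1)" "hd ys \<in> insert b (set q2)"
    unfolding xs_def ys_def by (cases q1 rule: rev_cases; simp) (cases q2; simp)
  ultimately show ?thesis unfolding q by auto
qed

end

locale internal_path_and_leaf = long_internal_path +
  fixes l x :: 'a
  assumes leaf: "deg E l = 1" and leaf_edge: "{x, l} \<in> E"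
begin

definition removed :: "'a set set" where "removed = {{a, hd q}, {last q, b}, {x, l}}"
definition added :: "'a set set" where "added = {{a, b}, {x, hd q}, {last q, l}}"
definition swapped :: "'a set set" where "swapped = E - removed \<union> added"

lemmas inner_ends = hd_in_set[OF inner_nonempty] last_in_set[OF inner_nonempty]

lemma leaf_off_path: "l \<notin> set q" "l \<noteq> a" "l \<noteq> b"
  using deg_inner deg_ends leaf by force+

lemma leaf_neighbour_off_inner: "x \<notin> set q"
proof
  assume "x \<in> set q"
  then have "l \<in> insert a (insert b (set q))" using leaf_edge by (rule inner_neighbour)
  with leaf_off_path show False by blast
qed

lemma ends_distinct: "a \<noteq> hd q" "last q \<noteq> b" "x \<noteq> hd q" "last q \<noteq> l"
  using ends_notin_inner inner_ends leaf_neighbour_off_inner leaf_off_path by blast+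

lemma in_V: "a \<in> V" "b \<in> V" "hd q \<in> V" "last q \<in> V" "x \<in> V" "l \<in> V"
  and leaf_neighbour_ne: "x \<noteq> l"
  using tree_edgeD[OF tree edge_first] tree_edgeD[OF tree edge_last] tree_edgeD[OF tree leaf_edge]
  by simp_all

lemma deg_leaf_neighbour: "2 \<le> deg E x"
proof (rule ccontr)
  assume "\<not> 2 \<le> deg E x"
  moreover have "deg E x \<noteq> 0" using tree_deg_pos[OF tree in_V(5,6) leaf_neighbour_ne] .
  ultimately have deg_x: "deg E x = 1" by simp
  have closed: "z \<in> {x, l}" if "{y, z} \<in> E" "y \<in> {x, l}" for y z
  proof (cases "y = x")
    case True
    then show ?thesis using deg1_neighbour[OF deg_x leaf_edge] that(1) by simp
  next
    case False
    then show ?thesis using deg1_neighbour[OF leaf, of x z] leaf_edge that by (simp add: insert_commute)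
  qed
  have "a \<in> {x, l}"
    using reachable_closed[OF tree_reachable[OF tree in_V(6,1)] _ closed] by simp
  with deg_x deg_ends leaf_off_path show False by auto
qed

lemma removed_distinct: "{a, hd q} \<noteq> {last q, b}" "{a, hd q} \<noteq> {x, l}" "{last q, b} \<noteq> {x, l}"
  using ends_notin_inner inner_ends leaf_off_path by (auto simp: doubleton_eq_iff)

lemma added_distinct: "{a, b} \<noteq> {x, hd q}" "{a, b} \<noteq> {last q, l}" "{x, hd q} \<noteq> {last q, l}"
  using ends_notin_inner inner_ends leaf_off_path leaf_neighbour_ne by (auto simp: doubleton_eq_iff)

lemma removed_subset: "removed \<subseteq> E"
  unfolding removed_def using edge_first edge_last leaf_edge by simp

lemma added_edges: "\<forall>e\<in>added. e \<subseteq> V \<and> card e = 2"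
  unfolding added_def using in_V ends_notin_inner ends_distinct by auto

lemma walk_inner_swapped: "is_walk swapped q"
proof (rule is_walk_subgraph[OF walk_inner])
  fix e assume "e \<in> E" "e \<subseteq> set q"
  moreover have "e \<notin> removed"
    using \<open>e \<subseteq> set q\<close> ends_notin_inner leaf_off_path unfolding removed_def by auto
  ultimately show "e \<in> swapped" unfolding swapped_def by blast
qed

lemma reachable_swapped: "v \<in> V \<Longrightarrow> reachable swapped v a"
proof -
  have added_swapped: "e \<in> added \<Longrightarrow> e \<in> swapped" for e unfolding swapped_def by blast
  have x_l: "reachable swapped x l"
  proof -
    have "reachable swapped x (hd q)" "reachable swapped (last q) l"
      using added_swapped unfolding added_def by (simp_all add: reachable_edge)
    moreover have "reachable swapped (hd q) (last q)"
      using walk_reachable[OF walk_inner_swapped inner_ends] .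
    ultimately show ?thesis by (blast intro: reachable_trans)
  qed
  have outside: "reachable swapped y z" if "{y, z} \<in> E" "y \<notin> set q" "z \<notin> set q" for y z
  proof (cases "{y, z} \<in> removed")
    case True
    with that inner_ends have "{y, z} = {x, l}" unfolding removed_def by (auto simp: doubleton_eq_iff)
    then have "(y = x \<and> z = l) \<or> (y = l \<and> z = x)" by (auto simp: doubleton_eq_iff)
    then show ?thesis using x_l reachable_sym[OF x_l] by blast
  next
    case False
    with that(1) show ?thesis unfolding swapped_def by (simp add: reachable_edge)
  qed
  have boundary: "reachable swapped a z" if "{y, z} \<in> E" "y \<in> set q" "z \<notin> set q" for y z
  proof -
    from that have "z = a \<or> z = b" using inner_neighbour by blast
    then show ?thesis
      using added_swapped[of "{a, b}"] unfolding added_def by (auto intro: reachable_refl reachable_edge)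
  qed
  have off_inner: "reachable swapped v a" if "v \<in> V" "v \<notin> set q" for v
    using reachable_collapse[OF tree_reachable[OF tree that(1) in_V(1)] ends_notin_inner(1) outside boundary]
      that(2) by simp
  show "v \<in> V \<Longrightarrow> reachable swapped v a"
  proof (cases "v \<in> set q")
    case True
    have "reachable swapped v (hd q)" using walk_reachable[OF walk_inner_swapped True inner_ends(1)] .
    moreover have "reachable swapped (hd q) x"
      using added_swapped unfolding added_def by (simp add: reachable_edge insert_commute)
    moreover have "reachable swapped x a" using off_inner in_V leaf_neighbour_off_inner by blast
    ultimately show ?thesis by (blast intro: reachable_trans)
  qed (use off_inner in blast)
qed

lemma swapped_tree: "is_tree V swapped" and added_disjoint: "added \<inter> (E - removed) = {}"
proof -
  have "card added = card removed"
    unfolding removed_def added_def using removed_distinct added_distinct by simp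
  then show "is_tree V swapped" "added \<inter> (E - removed) = {}"
    using tree_exchange[OF tree removed_subset _ _ added_edges in_V(1)] reachable_swapped
    unfolding swapped_def added_def by simp_all
qed

lemma deg_swapped: "deg swapped v = deg E v"
proof -
  let ?ind = "\<lambda>e. of_bool (v \<in> e) :: nat"
  have fin: "finite E" "finite added" "finite swapped"
    using tree_finite_edges[OF tree] tree_finite_edges[OF swapped_tree] unfolding added_def by simp_all
  note doubletons = ends_distinct ends_notin_inner(3) leaf_neighbour_ne
  have incidences: "(\<Sum>e\<in>removed. ?ind e) = (\<Sum>e\<in>added. ?ind e)"
    unfolding removed_def added_def sum_three[OF removed_distinct] sum_three[OF added_distinct]
      of_bool_mem_doubleton[OF doubletons(1)] of_bool_mem_doubleton[OF doubletons(2)]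
      of_bool_mem_doubleton[OF doubletons(3)] of_bool_mem_doubleton[OF doubletons(4)]
      of_bool_mem_doubleton[OF doubletons(5)] of_bool_mem_doubleton[OF doubletons(6)]
    by linarith
  have "deg swapped v = (\<Sum>e\<in>swapped. ?ind e)" using fin(3) by (rule deg_eq_sum)
  also have "\<dots> = (\<Sum>e\<in>E. ?ind e)"
    using sum_exchange[OF fin(1) removed_subset fin(2) added_disjoint, of ?ind] incidences
    unfolding swapped_def by simp
  also have "\<dots> = deg E v" using fin(1) by (rule deg_eq_sum[symmetric])
  finally show ?thesis .
qed

lemma M2_swapped: "M2 E < M2 swapped"
proof -
  let ?w = "\<lambda>e. \<Prod>v\<in>e. deg E v"
  have fin: "finite E" "finite added" using tree_finite_edges[OF tree] unfolding added_def by simp_all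
  have "M2 swapped = sum ?w swapped" unfolding M2_def deg_swapped ..
  then have sums: "M2 swapped + sum ?w removed = M2 E + sum ?w added"
    using sum_exchange[OF fin(1) removed_subset fin(2) added_disjoint, of ?w]
    unfolding M2_def swapped_def by simp
  have "sum ?w removed = deg E a * 2 + 2 * deg E b + deg E x * 1"
    "sum ?w added = deg E a * deg E b + deg E x * 2 + 2 * 1"
    unfolding removed_def added_def sum_three[OF removed_distinct] sum_three[OF added_distinct]
    using ends_distinct ends_notin_inner(3) leaf_neighbour_ne deg_inner[OF inner_ends(1)]
      deg_inner[OF inner_ends(2)] leaf
    by simp_all
  moreover have "deg E a * 2 + 2 * deg E b + deg E x < deg E a * deg E b + deg E x * 2 + 2"
  proof -
    obtain i j where "deg E a = i + 3" "deg E b = j + 3"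
      using deg_ends by (metis add.commute le_iff_add)
    then show ?thesis using deg_leaf_neighbour by (simp add: algebra_simps)
  qed
  ultimately show ?thesis using sums by simp
qed

end

lemma tree_internal_path_improvable:
  assumes tree: "is_tree V E" and p: "internal_path E p" and "1 < path_length p"
  shows "\<exists>E'. is_tree V E' \<and> (\<forall>v. deg E' v = deg E v) \<and> M2 E < M2 E'"
proof -
  obtain a q b where p_eq: "p = a # q @ [b]" and "q \<noteq> []"
  proof -
    from \<open>1 < path_length p\<close> obtain a r where "p = a # r" "2 \<le> length r"
      unfolding path_length_def by (cases p) auto
    moreover from this have "r = butlast r @ [last r]" "butlast r \<noteq> []"
      by (cases r rule: rev_cases; auto)+
    ultimately show thesis using that[of a "butlast r" "last r"] by simp
  qed
  interpret long_internal_path V E a b q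
    using tree p \<open>q \<noteq> []\<close> unfolding p_eq by unfold_locales
  have "card {a, b} \<le> card V"
    using tree_edgeD[OF tree edge_first] tree_edgeD[OF tree edge_last] tree_finite_vertices[OF tree]
    by (intro card_mono) auto
  then have "2 \<le> card V" using ends_notin_inner(3) by simp
  then obtain l where "l \<in> V" "deg E l = 1" using tree_leaf_exists[OF tree] by blast
  then obtain x where "{l, x} \<in> E"
    using exists_neighbour_outside[of E "{}" l] tree_edge_card[OF tree] by auto
  interpret internal_path_and_leaf V E a b q l x
    using \<open>deg E l = 1\<close> \<open>{l, x} \<in> E\<close> by unfold_locales (simp_all add: insert_commute)
  show ?thesis using swapped_tree deg_swapped M2_swapped by blast
qed

theorem lemma3:
  fixes V :: "'a set" and E :: "'a set set" and n k :: nat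
  assumes "3 \<le> k" and "k \<le> n - 1"
    and "(V, E) \<in> CT n k"
    and "\<forall>(V', E') \<in> (CT n k :: (nat set \<times> nat set set) set). M2 E' \<le> M2 E"
  shows "\<forall>p. internal_path E p \<longrightarrow> \<not> path_length p > 1"
proof (intro allI impI notI)
  fix p assume "internal_path E p" and "path_length p > 1"
  have tree: "is_tree V E" using assms(3) unfolding CT_def chemical_tree_def by simp
  then obtain E' where tree': "is_tree V E'" and "\<forall>v. deg E' v = deg E v" and "M2 E < M2 E'"
    using tree_internal_path_improvable \<open>internal_path E p\<close> \<open>path_length p > 1\<close> by blast
  then have "(V, E') \<in> CT n k" using CT_same_degrees[OF assms(3) tree'] by blast
  obtain f :: "'a \<Rightarrow> nat" where "inj_on f V"
    using finite_imp_inj_to_nat_seg[OF tree_finite_vertices[OF tree]] by blast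
  then have "(f ` V, (`) f ` E') \<in> CT n k" "M2 ((`) f ` E') = M2 E'"
    using CT_relabel[OF tree' _ \<open>(V, E') \<in> CT n k\<close>] M2_relabel[OF tree'] by simp_all
  with assms(4) \<open>M2 E < M2 E'\<close> show False by fastforce
qed

end
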